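(* Let $\mathbf{p}$ be a finite list of distinct predicate constants (the explainable symbols), and let $C$, $L$, $S$, $D$ be finite sets of causal rules of types C, L, S and D respectively (with respect to $\mathbf{p}$). Let $T$ be the causal theory with explainable symbols $\mathbf{p}$ and set of rules $C\cup L\cup S\cup D$. Then the second-order sentence $\mathrm{SM}_{\mathbf{p}\widehat{\mathbf{p}}}[\mathrm{tr}[C,L,S,D]]$ is logically equivalent to $T\land CC$.
   Context: Formulas are first-order formulas built from $\top,\bot,\neg,\land,\lor,\to$ and quantifiers; $\widetilde\forall F$ denotes the universal closure of $F$. Throughout, the bodies of causal rules contain no implication $\to$. Causal theories. A causal theory $T$ is given by a list $\mathbf{p}$ of distinct predicate constants (explainable symbols; equality is not among them) and a finite set of causal rules $F\Leftarrow G$, where $F,G$ are first-order formulas. For each $p\in\mathbf{p}$ choose a new predicate variable $u_p$ of the same arity; let $\mathbf{u}$ be the list of these. $T^\dagger(\mathbf{u})$ is the conjunction of the formulas $\forall\mathbf{x}(G\to F^{\mathbf{p}}_{\mathbf{u}})$ over all rules $F\Leftarrow G$ of $T$, where $\mathbf{x}$ lists the free variables of $F,G$ and $F^{\mathbf{p}}_{\mathbf{u}}$ is the result of replacing each $p$ by $u_p$. $T$ is identified with the sentence $\forall\mathbf{u}(T^\dagger(\mathbf{u})\leftrightarrow(\mathbf{u}=\mathbf{p}))$, where $\mathbf{u}=\mathbf{p}$ is the conjunction of $\forall\mathbf{x}(u_p(\mathbf{x})\leftrightarrow p(\mathbf{x}))$ for all $p\in\mathbf{p}$. Rule types: a C-rule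 is $\bot\Leftarrow G$; an L-rule has head a literal whose predicate is in $\mathbf{p}$; an S-rule has head $L_1\leftrightarrow L_2$ with $L_1,L_2$ literals whose predicates are in $\mathbf{p}$; a D-rule has head $L_1\lor\dots\lor L_n$ ($n\ge 0$), each $L_i$ a literal with predicate in $\mathbf{p}$, i.e. it has the form $\bigvee_{A\in Pos}A\lor\bigvee_{A\in Neg}\neg A\Leftarrow G$ for sets $Pos,Neg$ of atomic formulas. Stable models. A program rule is a sentence $\widetilde\forall(F\to G)$ with no other occurrence of $\to$ (a sentence without $\to$ is identified with $\top\to F$); a logic program is a conjunction of program rules. For predicate constants (or variables) $p,q$ of the same arity, $p\le q$ is $\forall\mathbf{x}(p(\mathbf{x})\to q(\mathbf{x}))$; for tuples, $\mathbf{p}\le\mathbf{q}$ is the conjunction componentwise, and $\mathbf{p}<\mathbf{q}$ is $(\mathbf{p}\le\mathbf{q})\land\neg(\mathbf{q}\le\mathbf{p})$. For a list $\mathbf{q}$ of intensional predicates with corresponding new predicate variables $\mathbf{w}$, and a logic program $F$, $\mathrm{SM}_{\mathbf{q}}[F]$ is $F\land\neg\exists\mathbf{w}((\mathbf{w}<\mathbf{q})\land F^\diamond(\mathbf{w}))$, where $F^\diamond(\mathbf{w})$ is obtained from $F$ by replacing each occurrence of each $q\in\mathbf{q}$ that is not in the scope of negation $\neg$ by the corresponding variable. Translation. For each $p\in\mathbf{p}$ let $\widehat{p}$ be a new predicate constant of the same arity; $\widehat{\mathbf{p}}$ is the list of these; for an atom $A=p(\mathbf{t})$ with $p\in\mathbf{p}$,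 $\widehat A$ denotes $\widehat p(\mathbf{t})$. $CC$ is the conjunction, over all $p\in\mathbf{p}$, of $\forall\mathbf{x}\neg(p(\mathbf{x})\land\widehat p(\mathbf{x}))$ and $\forall\mathbf{x}\neg(\neg p(\mathbf{x})\land\neg\widehat p(\mathbf{x}))$. Define: $\mathrm{tr}_c[\bot\Leftarrow G]=\widetilde\forall\neg G$; $\mathrm{tr}_l[p(\mathbf{t})\Leftarrow G]=\widetilde\forall(\neg\neg G\to p(\mathbf{t}))$, $\mathrm{tr}_l[\neg p(\mathbf{t})\Leftarrow G]=\widetilde\forall(\neg\neg G\to\widehat p(\mathbf{t}))$; $\mathrm{tr}_s[p_1(\mathbf{t}^1)\leftrightarrow p_2(\mathbf{t}^2)\Leftarrow G]=\mathrm{tr}_s[\neg p_1(\mathbf{t}^1)\leftrightarrow\neg p_2(\mathbf{t}^2)\Leftarrow G]$ is the conjunction of $\widetilde\forall(\neg\neg G\land p_1(\mathbf{t}^1)\to p_2(\mathbf{t}^2))$, $\widetilde\forall(\neg\neg G\land p_2(\mathbf{t}^2)\to p_1(\mathbf{t}^1))$, $\widetilde\forall(\neg\neg G\land \widehat{p_1}(\mathbf{t}^1)\to \widehat{p_2}(\mathbf{t}^2))$, $\widetilde\forall(\neg\neg G\land \widehat{p_2}(\mathbf{t}^2)\to \widehat{p_1}(\mathbf{t}^1))$; $\mathrm{tr}_s[\neg p_1(\mathbf{t}^1)\leftrightarrow p_2(\mathbf{t}^2)\Leftarrow G]=\mathrm{tr}_s[p_1(\mathbf{t}^1)\leftrightarrow\neg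 p_2(\mathbf{t}^2)\Leftarrow G]$ is the conjunction of $\widetilde\forall(\neg\neg G\land \widehat{p_1}(\mathbf{t}^1)\to p_2(\mathbf{t}^2))$, $\widetilde\forall(\neg\neg G\land p_2(\mathbf{t}^2)\to \widehat{p_1}(\mathbf{t}^1))$, $\widetilde\forall(\neg\neg G\land p_1(\mathbf{t}^1)\to \widehat{p_2}(\mathbf{t}^2))$, $\widetilde\forall(\neg\neg G\land \widehat{p_2}(\mathbf{t}^2)\to p_1(\mathbf{t}^1))$; and for a D-rule $\bigvee_{A\in Pos}A\lor\bigvee_{A\in Neg}\neg A\Leftarrow G$, $\mathrm{tr}_d$ gives $\widetilde\forall\big(\neg\neg G\land\bigwedge_{A\in Pos}(\widehat A\lor\neg\widehat A)\land\bigwedge_{A\in Neg}(A\lor\neg A)\to\bigvee_{A\in Pos}A\lor\bigvee_{A\in Neg}\widehat A\big)$. $\mathrm{tr}[C,L,S,D]$ is the conjunction of $\mathrm{tr}_c[R]$ for $R\in C$, $\mathrm{tr}_l[R]$ for $R\in L$, $\mathrm{tr}_s[R]$ for $R\in S$, $\mathrm{tr}_d[R]$ for $R\in D$, and $CC$. In $\mathrm{SM}_{\mathbf{p}\widehat{\mathbf{p}}}$ the intensional predicates are those of $\mathbf{p}$ and $\widehat{\mathbf{p}}$. *)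

theory Defs
  imports Main
begin

datatype 'f trm = Var nat | Fn 'f "'f trm list"

datatype ('f, 'p) form =
    FTop | FBot
  | FAtom 'p "'f trm list"
  | FEq "'f trm" "'f trm"
  | FNeg "('f, 'p) form"
  | FAnd "('f, 'p) form" "('f, 'p) form"
  | FOr "('f, 'p) form" "('f, 'p) form"
  | FImp "('f, 'p) form" "('f, 'p) form"
  | FAll nat "('f, 'p) form"
  | FEx nat "('f, 'p) form"

datatype 'p hsym = Orig 'p | Hat 'p

fun lift :: "('f, 'p) form \<Rightarrow> ('f, 'p hsym) form" where
  "lift FTop = FTop"
| "lift FBot = FBot"
| "lift (FAtom p ts) = FAtom (Orig p) ts"
| "lift (FEq s t) = FEq s t"
| "lift (FNeg F) = FNeg (lift F)"
| "lift (FAnd F G) = FAnd (lift F) (lift G)"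
| "lift (FOr F G) = FOr (lift F) (lift G)"
| "lift (FImp F G) = FImp (lift F) (lift G)"
| "lift (FAll x F) = FAll x (lift F)"
| "lift (FEx x F) = FEx x (lift F)"

definition FIff :: "('f, 'p) form \<Rightarrow> ('f, 'p) form \<Rightarrow> ('f, 'p) form" where
  "FIff F G = FAnd (FImp F G) (FImp G F)"

fun disj :: "('f, 'p) form list \<Rightarrow> ('f, 'p) form" where
  "disj [] = FBot"
| "disj [F] = F"
| "disj (F # Fs) = FOr F (disj Fs)"

fun conj :: "('f, 'p) form list \<Rightarrow> ('f, 'p) form" where
  "conj [] = FTop"
| "conj [F] = F"
| "conj (F # Fs) = FAnd F (conj Fs)"

fun no_imp :: "('f, 'p) form \<Rightarrow> bool" where
  "no_imp (FNeg F) = no_imp F"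
| "no_imp (FAnd F G) = (no_imp F \<and> no_imp G)"
| "no_imp (FOr F G) = (no_imp F \<and> no_imp G)"
| "no_imp (FImp F G) = False"
| "no_imp (FAll x F) = no_imp F"
| "no_imp (FEx x F) = no_imp F"
| "no_imp _ = True"

fun wf :: "('p \<Rightarrow> nat) \<Rightarrow> ('f, 'p) form \<Rightarrow> bool" where
  "wf ar (FAtom p ts) = (length ts = ar p)"
| "wf ar (FNeg F) = wf ar F"
| "wf ar (FAnd F G) = (wf ar F \<and> wf ar G)"
| "wf ar (FOr F G) = (wf ar F \<and> wf ar G)"
| "wf ar (FImp F G) = (wf ar F \<and> wf ar G)"
| "wf ar (FAll x F) = wf ar F"
| "wf ar (FEx x F) = wf ar F"
| "wf ar _ = True"

text \<open>A structure with universe the type 'a: interpretation I of function constants and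
  P of predicate constants (relations as predicates on argument lists).\<close>
fun evalt :: "('f \<Rightarrow> 'a list \<Rightarrow> 'a) \<Rightarrow> (nat \<Rightarrow> 'a) \<Rightarrow> 'f trm \<Rightarrow> 'a" where
  "evalt I e (Var n) = e n"
| "evalt I e (Fn f ts) = I f (map (evalt I e) ts)"

fun eval :: "('f \<Rightarrow> 'a list \<Rightarrow> 'a) \<Rightarrow> ('p \<Rightarrow> 'a list \<Rightarrow> bool) \<Rightarrow> (nat \<Rightarrow> 'a)
              \<Rightarrow> ('f, 'p) form \<Rightarrow> bool" where
  "eval I P e FTop = True"
| "eval I P e FBot = False"
| "eval I P e (FAtom p ts) = P p (map (evalt I e) ts)"
| "eval I P e (FEq s t) = (evalt I e s = evalt I e t)"
| "eval I P e (FNeg F) = (\<not> eval I P e F)"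
| "eval I P e (FAnd F G) = (eval I P e F \<and> eval I P e G)"
| "eval I P e (FOr F G) = (eval I P e F \<or> eval I P e G)"
| "eval I P e (FImp F G) = (eval I P e F \<longrightarrow> eval I P e G)"
| "eval I P e (FAll x F) = (\<forall>a. eval I P (e(x := a)) F)"
| "eval I P e (FEx x F) = (\<exists>a. eval I P (e(x := a)) F)"

definition holds :: "('f \<Rightarrow> 'a list \<Rightarrow> 'a) \<Rightarrow> ('p \<Rightarrow> 'a list \<Rightarrow> bool) \<Rightarrow> ('f, 'p) form \<Rightarrow> bool" where
  "holds I P F = (\<forall>e. eval I P e F)"

text \<open>Semantics of the formula F-diamond(w): every occurrence of an intensional predicate
  q in Q that is not in the scope of negation is interpreted by W q; occurrences in the
  scope of negation keep their original interpretation P.\<close>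
fun evald :: "('f \<Rightarrow> 'a list \<Rightarrow> 'a) \<Rightarrow> ('p \<Rightarrow> 'a list \<Rightarrow> bool) \<Rightarrow> ('p \<Rightarrow> 'a list \<Rightarrow> bool)
              \<Rightarrow> 'p set \<Rightarrow> (nat \<Rightarrow> 'a) \<Rightarrow> ('f, 'p) form \<Rightarrow> bool" where
  "evald I P W Q e FTop = True"
| "evald I P W Q e FBot = False"
| "evald I P W Q e (FAtom p ts) = (if p \<in> Q then W p else P p) (map (evalt I e) ts)"
| "evald I P W Q e (FEq s t) = (evalt I e s = evalt I e t)"
| "evald I P W Q e (FNeg F) = (\<not> eval I P e F)"
| "evald I P W Q e (FAnd F G) = (evald I P W Q e F \<and> evald I P W Q e G)"
| "evald I P W Q e (FOr F G) = (evald I P W Q e F \<or> evald I P W Q e G)"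
| "evald I P W Q e (FImp F G) = (evald I P W Q e F \<longrightarrow> evald I P W Q e G)"
| "evald I P W Q e (FAll x F) = (\<forall>a. evald I P W Q (e(x := a)) F)"
| "evald I P W Q e (FEx x F) = (\<exists>a. evald I P W Q (e(x := a)) F)"

definition le_on :: "('p \<Rightarrow> nat) \<Rightarrow> 'p set \<Rightarrow> ('p \<Rightarrow> 'a list \<Rightarrow> bool) \<Rightarrow> ('p \<Rightarrow> 'a list \<Rightarrow> bool) \<Rightarrow> bool" where
  "le_on ar Q R1 R2 = (\<forall>q\<in>Q. \<forall>xs. length xs = ar q \<longrightarrow> R1 q xs \<longrightarrow> R2 q xs)"

text \<open>Truth of SM_Q[F] in the structure (I,P), where the logic program F is given as the set
  Prog of its program rules (each understood as its universal closure).\<close>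
definition SM :: "('p \<Rightarrow> nat) \<Rightarrow> 'p set \<Rightarrow> ('f, 'p) form set
                  \<Rightarrow> ('f \<Rightarrow> 'a list \<Rightarrow> 'a) \<Rightarrow> ('p \<Rightarrow> 'a list \<Rightarrow> bool) \<Rightarrow> bool" where
  "SM ar Q Prog I P =
     ((\<forall>F\<in>Prog. holds I P F) \<and>
      \<not> (\<exists>W. le_on ar Q W P \<and> \<not> le_on ar Q P W \<and> (\<forall>F\<in>Prog. \<forall>e. evald I P W Q e F)))"

type_synonym ('f, 'p) crule = "('f, 'p) form \<times> ('f, 'p) form"  \<comment> \<open>(head F, body G) for F <= G\<close>

text \<open>Truth of the causal theory T (explainable symbols ps, rules R) in (I,P):
  forall u. (T-dagger(u) <-> u = p).\<close>
definition causal_sat :: "('p \<Rightarrow> nat) \<Rightarrow> 'p list \<Rightarrow> ('f, 'p) crule set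
                  \<Rightarrow> ('f \<Rightarrow> 'a list \<Rightarrow> 'a) \<Rightarrow> ('p \<Rightarrow> 'a list \<Rightarrow> bool) \<Rightarrow> bool" where
  "causal_sat ar ps R I P =
     (\<forall>U :: 'p \<Rightarrow> 'a list \<Rightarrow> bool.
        (\<forall>(F, G)\<in>R. \<forall>e. eval I P e G \<longrightarrow> eval I (\<lambda>q. if q \<in> set ps then U q else P q) e F)
        \<longleftrightarrow> (\<forall>p\<in>set ps. \<forall>xs. length xs = ar p \<longrightarrow> (U p xs \<longleftrightarrow> P p xs)))"

text \<open>Literals: (True, p, ts) is p(ts), (False, p, ts) is not p(ts). Atoms: (p, ts).\<close>
type_synonym ('f, 'p) lit = "bool \<times> 'p \<times> 'f trm list"
type_synonym ('f, 'p) atm = "'p \<times> 'f trm list"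

fun lit_form :: "('f, 'p) lit \<Rightarrow> ('f, 'p) form" where
  "lit_form (b, p, ts) = (if b then FAtom p ts else FNeg (FAtom p ts))"

text \<open>The rule types. A C-rule is given by its body G; an L-rule by (literal, body);
  an S-rule by (L1, L2, body); a D-rule by (Pos, Neg, body).\<close>
definition C_rule :: "('f, 'p) form \<Rightarrow> ('f, 'p) crule" where
  "C_rule G = (FBot, G)"

definition L_rule :: "('f, 'p) lit \<times> ('f, 'p) form \<Rightarrow> ('f, 'p) crule" where
  "L_rule r = (lit_form (fst r), snd r)"

definition S_rule :: "('f, 'p) lit \<times> ('f, 'p) lit \<times> ('f, 'p) form \<Rightarrow> ('f, 'p) crule" where
  "S_rule r = (case r of (l1, l2, G) \<Rightarrow> (FIff (lit_form l1) (lit_form l2), G))"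

definition D_rule :: "('f, 'p) atm list \<times> ('f, 'p) atm list \<times> ('f, 'p) form \<Rightarrow> ('f, 'p) crule" where
  "D_rule r = (case r of (Pos, Ng, G) \<Rightarrow>
      (disj (map (\<lambda>(p, ts). FAtom p ts) Pos @ map (\<lambda>(p, ts). FNeg (FAtom p ts)) Ng), G))"

definition rules_of where
  "rules_of C L S D = C_rule ` C \<union> L_rule ` L \<union> S_rule ` S \<union> D_rule ` D"

definition ok_lit :: "('p \<Rightarrow> nat) \<Rightarrow> 'p list \<Rightarrow> ('f, 'p) lit \<Rightarrow> bool" where
  "ok_lit ar ps l = (case l of (b, p, ts) \<Rightarrow> p \<in> set ps \<and> length ts = ar p)"

definition ok_atm :: "('p \<Rightarrow> nat) \<Rightarrow> 'p list \<Rightarrow> ('f, 'p) atm \<Rightarrow> bool" where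
  "ok_atm ar ps a = (case a of (p, ts) \<Rightarrow> p \<in> set ps \<and> length ts = ar p)"

definition ok_body :: "('p \<Rightarrow> nat) \<Rightarrow> ('f, 'p) form \<Rightarrow> bool" where
  "ok_body ar G = (wf ar G \<and> no_imp G)"

abbreviation nn :: "('f, 'p) form \<Rightarrow> ('f, 'p) form" where
  "nn G \<equiv> FNeg (FNeg G)"

definition tr_c :: "('f, 'p) form \<Rightarrow> ('f, 'p hsym) form set" where
  "tr_c G = {FNeg (lift G)}"

definition tr_l :: "('f, 'p) lit \<times> ('f, 'p) form \<Rightarrow> ('f, 'p hsym) form set" where
  "tr_l r = (case r of ((b, p, ts), G) \<Rightarrow>
     {FImp (nn (lift G)) (FAtom (if b then Orig p else Hat p) ts)})"

definition tr_s :: "('f, 'p) lit \<times> ('f, 'p) lit \<times> ('f, 'p) form \<Rightarrow> ('f, 'p hsym) form set" where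
  "tr_s r = (case r of ((b1, p1, t1), (b2, p2, t2), G) \<Rightarrow>
     (let G' = nn (lift G);
          O1 = FAtom (Orig p1) t1; H1 = FAtom (Hat p1) t1;
          O2 = FAtom (Orig p2) t2; H2 = FAtom (Hat p2) t2
      in if b1 = b2 then
           {FImp (FAnd G' O1) O2, FImp (FAnd G' O2) O1,
            FImp (FAnd G' H1) H2, FImp (FAnd G' H2) H1}
         else
           {FImp (FAnd G' H1) O2, FImp (FAnd G' O2) H1,
            FImp (FAnd G' O1) H2, FImp (FAnd G' H2) O1}))"

definition tr_d :: "('f, 'p) atm list \<times> ('f, 'p) atm list \<times> ('f, 'p) form \<Rightarrow> ('f, 'p hsym) form set" where
  "tr_d r = (case r of (Pos, Ng, G) \<Rightarrow>
     {FImp (FAnd (nn (lift G))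
                 (conj (map (\<lambda>(p, ts). FOr (FAtom (Hat p) ts) (FNeg (FAtom (Hat p) ts))) Pos
                      @ map (\<lambda>(p, ts). FOr (FAtom (Orig p) ts) (FNeg (FAtom (Orig p) ts))) Ng)))
           (disj (map (\<lambda>(p, ts). FAtom (Orig p) ts) Pos @ map (\<lambda>(p, ts). FAtom (Hat p) ts) Ng))})"

definition CC :: "('p \<Rightarrow> nat) \<Rightarrow> 'p list \<Rightarrow> ('f, 'p hsym) form set" where
  "CC ar ps = (\<Union>p\<in>set ps.
     (let xs = map Var [0..<ar p] in
       {FNeg (FAnd (FAtom (Orig p) xs) (FAtom (Hat p) xs)),
        FNeg (FAnd (FNeg (FAtom (Orig p) xs)) (FNeg (FAtom (Hat p) xs)))}))"

definition tr where
  "tr ar ps C L S D = (\<Union>G\<in>C. tr_c G) \<union> (\<Union>r\<in>L. tr_l r) \<union> (\<Union>r\<in>S. tr_s r)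
                      \<union> (\<Union>r\<in>D. tr_d r) \<union> CC ar ps"

fun har :: "('p \<Rightarrow> nat) \<Rightarrow> 'p hsym \<Rightarrow> nat" where
  "har ar (Orig p) = ar p"
| "har ar (Hat p) = ar p"

definition hQ :: "'p list \<Rightarrow> 'p hsym set" where
  "hQ ps = Orig ` set ps \<union> Hat ` set ps"

end

theory Submission
  imports Defs
begin

text \<open>
  Under CC the hatted predicates are the complements of the original ones. Then every program
  rule of the translation holds iff the corresponding causal rule is satisfied when its head is
  evaluated in the structure itself. For minimality, an interpretation u of the explainable
  symbols corresponds to the interpretation w below (p, hat p) that keeps p(x) where u(x) holds
  and hat p(x) where u(x) fails; every w below (p, hat p) arises in this way, and w is strictly
  below (p, hat p) iff u differs from p. Provided the causal rules hold for u = p, the reduct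
  F-diamond(w) of the translation holds iff u satisfies all causal rules, so the absence of a
  strictly smaller model of the reduct is the uniqueness of the solution u = p of T-dagger(u).
\<close>

lemma eval_lift [simp]: "eval I P e (lift G) = eval I (P \<circ> Orig) e G"
  by (induction G arbitrary: e) auto

lemma eval_disj [simp]: "eval I P e (disj Fs) = (\<exists>F\<in>set Fs. eval I P e F)"
  by (induction Fs rule: disj.induct) auto

lemma eval_conj [simp]: "eval I P e (conj Fs) = (\<forall>F\<in>set Fs. eval I P e F)"
  by (induction Fs rule: conj.induct) auto

lemma evald_disj [simp]: "evald I P W Q e (disj Fs) = (\<exists>F\<in>set Fs. evald I P W Q e F)"
  by (induction Fs rule: disj.induct) auto

lemma evald_conj [simp]: "evald I P W Q e (conj Fs) = (\<forall>F\<in>set Fs. evald I P W Q e F)"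
  by (induction Fs rule: conj.induct) auto

lemma evald_cong_wf:
  assumes "wf (har ar) F"
    and "\<forall>q\<in>Q. \<forall>xs. length xs = har ar q \<longrightarrow> W1 q xs = W2 q xs"
  shows "evald I P W1 Q e F = evald I P W2 Q e F"
  using assms by (induction F arbitrary: e) auto

lemma ball_all_swap: "(\<forall>x\<in>A. \<forall>y. R x y) \<longleftrightarrow> (\<forall>y. \<forall>x\<in>A. R x y)"
  by blast

abbreviation holds_diamond ::
  "('f \<Rightarrow> 'a list \<Rightarrow> 'a) \<Rightarrow> ('p \<Rightarrow> 'a list \<Rightarrow> bool) \<Rightarrow> ('p \<Rightarrow> 'a list \<Rightarrow> bool) \<Rightarrow> 'p set
    \<Rightarrow> ('f, 'p) form set \<Rightarrow> bool" where
  "holds_diamond I P W Q Fs \<equiv> \<forall>F\<in>Fs. \<forall>e. evald I P W Q e F"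

definition ok_theory ::
  "('p \<Rightarrow> nat) \<Rightarrow> 'p list \<Rightarrow> ('f, 'p) form set \<Rightarrow> (('f, 'p) lit \<times> ('f, 'p) form) set
    \<Rightarrow> (('f, 'p) lit \<times> ('f, 'p) lit \<times> ('f, 'p) form) set
    \<Rightarrow> (('f, 'p) atm list \<times> ('f, 'p) atm list \<times> ('f, 'p) form) set \<Rightarrow> bool" where
  "ok_theory ar ps C L S D \<longleftrightarrow>
     (\<forall>G\<in>C. ok_body ar G) \<and> (\<forall>(l, G)\<in>L. ok_lit ar ps l \<and> ok_body ar G)
     \<and> (\<forall>(l1, l2, G)\<in>S. ok_lit ar ps l1 \<and> ok_lit ar ps l2 \<and> ok_body ar G)
     \<and> (\<forall>(Pos, Ng, G)\<in>D. (\<forall>a\<in>set Pos. ok_atm ar ps a) \<and> (\<forall>a\<in>set Ng. ok_atm ar ps a) \<and> ok_body ar G)"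

lemma ok_theoryD:
  assumes "ok_theory ar ps C L S D"
  shows "(l, G) \<in> L \<Longrightarrow> ok_lit ar ps l"
    and "(l1, l2, G) \<in> S \<Longrightarrow> ok_lit ar ps l1"
    and "(l1, l2, G) \<in> S \<Longrightarrow> ok_lit ar ps l2"
    and "(Pos, Ng, G) \<in> D \<Longrightarrow> \<forall>a\<in>set Pos. ok_atm ar ps a"
    and "(Pos, Ng, G) \<in> D \<Longrightarrow> \<forall>a\<in>set Ng. ok_atm ar ps a"
  using assms by (auto simp: ok_theory_def)

lemma wf_lift: "wf ar G \<Longrightarrow> wf (har ar) (lift G)"
  by (induction G) auto

lemma wf_disj: "\<forall>F\<in>set Fs. wf ar F \<Longrightarrow> wf ar (disj Fs)"
  by (induction Fs rule: disj.induct) auto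

lemma wf_conj: "\<forall>F\<in>set Fs. wf ar F \<Longrightarrow> wf ar (conj Fs)"
  by (induction Fs rule: conj.induct) auto

lemma wf_tr: "ok_theory ar ps C L S D \<Longrightarrow> F \<in> tr ar ps C L S D \<Longrightarrow> wf (har ar) F"
  by (fastforce simp: ok_theory_def tr_def tr_c_def tr_l_def tr_s_def tr_d_def CC_def ok_body_def
      ok_lit_def ok_atm_def Let_def wf_lift intro!: wf_disj wf_conj split: if_splits)

definition agree_on ::
  "('p \<Rightarrow> nat) \<Rightarrow> 'p list \<Rightarrow> ('p \<Rightarrow> 'a list \<Rightarrow> bool) \<Rightarrow> ('p \<Rightarrow> 'a list \<Rightarrow> bool) \<Rightarrow> bool" where
  "agree_on ar ps U V \<longleftrightarrow> (\<forall>p\<in>set ps. \<forall>xs. length xs = ar p \<longrightarrow> (U p xs \<longleftrightarrow> V p xs))"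

text \<open>rule_sat I P U r is the conjunct of T-dagger(U) contributed by the rule r.\<close>

definition rule_sat :: "('f \<Rightarrow> 'a list \<Rightarrow> 'a) \<Rightarrow> ('p \<Rightarrow> 'a list \<Rightarrow> bool) \<Rightarrow> ('p \<Rightarrow> 'a list \<Rightarrow> bool)
    \<Rightarrow> ('f, 'p) crule \<Rightarrow> bool" where
  "rule_sat I P U r \<longleftrightarrow> (\<forall>e. eval I P e (snd r) \<longrightarrow> eval I U e (fst r))"

fun explainable :: "('p \<Rightarrow> nat) \<Rightarrow> 'p list \<Rightarrow> ('f, 'p) form \<Rightarrow> bool" where
  "explainable ar ps FTop = True"
| "explainable ar ps FBot = True"
| "explainable ar ps (FAtom p ts) = (p \<in> set ps \<and> length ts = ar p)"
| "explainable ar ps (FEq s t) = False"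
| "explainable ar ps (FNeg F) = explainable ar ps F"
| "explainable ar ps (FAnd F G) = (explainable ar ps F \<and> explainable ar ps G)"
| "explainable ar ps (FOr F G) = (explainable ar ps F \<and> explainable ar ps G)"
| "explainable ar ps (FImp F G) = (explainable ar ps F \<and> explainable ar ps G)"
| "explainable ar ps (FAll x F) = False"
| "explainable ar ps (FEx x F) = False"

lemma eval_explainable_cong:
  "explainable ar ps F \<Longrightarrow> agree_on ar ps U V \<Longrightarrow> eval I U e F = eval I V e F"
  by (induction F) (auto simp: agree_on_def)

lemma explainable_disj: "\<forall>F\<in>set Fs. explainable ar ps F \<Longrightarrow> explainable ar ps (disj Fs)"
  by (induction Fs rule: disj.induct) auto

lemma explainable_lit_form: "ok_lit ar ps l \<Longrightarrow> explainable ar ps (lit_form l)"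
  by (cases l) (auto simp: ok_lit_def)

lemma explainable_heads:
  assumes "ok_theory ar ps C L S D" and "r \<in> rules_of C L S D"
  shows "explainable ar ps (fst r)"
proof -
  have "explainable ar ps (fst (L_rule r))" if "r \<in> L" for r
    using assms(1) that explainable_lit_form
    by (fastforce simp: ok_theory_def L_rule_def simp del: lit_form.simps)
  moreover have "explainable ar ps (fst (S_rule r))" if "r \<in> S" for r
    using assms(1) that explainable_lit_form
    by (fastforce simp: ok_theory_def S_rule_def FIff_def simp del: lit_form.simps)
  moreover have "explainable ar ps (fst (D_rule r))" if "r \<in> D" for r
    using assms(1) that
    by (cases r) (fastforce simp: ok_theory_def D_rule_def ok_atm_def intro!: explainable_disj)
  ultimately show ?thesis
    using assms(2) by (auto simp: rules_of_def C_rule_def)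
qed

lemma causal_sat_iff:
  assumes heads: "\<forall>r\<in>R. explainable ar ps (fst r)"
  shows "causal_sat ar ps R I P \<longleftrightarrow>
    (\<forall>r\<in>R. rule_sat I P P r) \<and> \<not> (\<exists>U. (\<forall>r\<in>R. rule_sat I P U r) \<and> \<not> agree_on ar ps U P)"
proof -
  have eval_head: "agree_on ar ps U V \<Longrightarrow> r \<in> R \<Longrightarrow> eval I U e (fst r) = eval I V e (fst r)" for U V e r
    using heads eval_explainable_cong by blast
  have "agree_on ar ps (\<lambda>q. if q \<in> set ps then U q else P q) U" for U
    by (simp add: agree_on_def)
  then have "causal_sat ar ps R I P \<longleftrightarrow> (\<forall>U. (\<forall>r\<in>R. rule_sat I P U r) \<longleftrightarrow> agree_on ar ps U P)"
    unfolding causal_sat_def rule_sat_def agree_on_def[symmetric] using eval_head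
    by (intro all_cong1 arg_cong2[where f = "(=)"] refl) fastforce
  moreover have "agree_on ar ps P P"
    by (simp add: agree_on_def)
  moreover have "agree_on ar ps U P \<Longrightarrow> rule_sat I P U r = rule_sat I P P r" if "r \<in> R" for U r
    using eval_head that by (simp add: rule_sat_def)
  ultimately show ?thesis
    by blast
qed

definition complementary :: "('p \<Rightarrow> nat) \<Rightarrow> 'p list \<Rightarrow> ('p hsym \<Rightarrow> 'a list \<Rightarrow> bool) \<Rightarrow> bool" where
  "complementary ar ps P \<longleftrightarrow>
     (\<forall>p\<in>set ps. \<forall>xs. length xs = ar p \<longrightarrow> (P (Hat p) xs \<longleftrightarrow> \<not> P (Orig p) xs))"

lemma complementaryD:
  "complementary ar ps P \<Longrightarrow> p \<in> set ps \<Longrightarrow> length xs = ar p \<Longrightarrow> P (Hat p) xs = (\<not> P (Orig p) xs)"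
  by (simp add: complementary_def)

lemma holds_CC_iff:
  fixes I :: "'f \<Rightarrow> 'a list \<Rightarrow> 'a" and P :: "'p hsym \<Rightarrow> 'a list \<Rightarrow> bool"
  shows "(\<forall>F\<in>CC ar ps. holds I P F) \<longleftrightarrow> complementary ar ps P"
proof
  assume CC: "\<forall>F\<in>CC ar ps. holds I P F"
  show "complementary ar ps P"
    unfolding complementary_def
  proof (intro ballI allI impI)
    fix p and xs :: "'a list" assume p: "p \<in> set ps" and len: "length xs = ar p"
    have args: "map (evalt I (nth xs) \<circ> Var) [0..<ar p] = xs"
      using len map_nth[of xs] by (simp add: comp_def)
    from CC p show "P (Hat p) xs \<longleftrightarrow> \<not> P (Orig p) xs"
      unfolding CC_def holds_def Let_def by (auto simp: args dest!: bspec spec[of _ "nth xs"])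
  qed
qed (auto simp: CC_def Let_def holds_def complementary_def)

lemma evald_CC: "F \<in> CC ar ps \<Longrightarrow> evald I P W Q e F = eval I P e F"
  by (auto simp: CC_def Let_def)

text \<open>
  split_interp P U is the interpretation w of p and hat p corresponding to the candidate U of
  T-dagger; merge_interp P W inverts it on the interpretations W below P.
\<close>

definition split_interp ::
  "('p hsym \<Rightarrow> 'a list \<Rightarrow> bool) \<Rightarrow> ('p \<Rightarrow> 'a list \<Rightarrow> bool) \<Rightarrow> 'p hsym \<Rightarrow> 'a list \<Rightarrow> bool" where
  "split_interp P U q xs =
    (case q of Orig p \<Rightarrow> P (Orig p) xs \<and> U p xs | Hat p \<Rightarrow> P (Hat p) xs \<and> \<not> U p xs)"

definition merge_interp ::
  "('p hsym \<Rightarrow> 'a list \<Rightarrow> bool) \<Rightarrow> ('p hsym \<Rightarrow> 'a list \<Rightarrow> bool) \<Rightarrow> 'p \<Rightarrow> 'a list \<Rightarrow> bool" where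
  "merge_interp P W p xs = (if P (Orig p) xs then W (Orig p) xs else \<not> W (Hat p) xs)"

lemma split_interp_simps [simp]:
  "split_interp P U (Orig p) xs \<longleftrightarrow> P (Orig p) xs \<and> U p xs"
  "split_interp P U (Hat p) xs \<longleftrightarrow> P (Hat p) xs \<and> \<not> U p xs"
  by (simp_all add: split_interp_def)

lemma hQ_iff [simp]: "Orig p \<in> hQ ps \<longleftrightarrow> p \<in> set ps" "Hat p \<in> hQ ps \<longleftrightarrow> p \<in> set ps"
  by (auto simp: hQ_def)

lemma ball_hQ: "(\<forall>q\<in>hQ ps. R q) \<longleftrightarrow> (\<forall>p\<in>set ps. R (Orig p) \<and> R (Hat p))"
  by (auto simp: hQ_def)

lemma le_on_split_interp: "le_on ar Q (split_interp P U) P"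
  by (auto simp: le_on_def split_interp_def split: hsym.split)

lemma le_on_split_interp_iff:
  assumes "complementary ar ps P"
  shows "le_on (har ar) (hQ ps) P (split_interp P U) \<longleftrightarrow> agree_on ar ps U (P \<circ> Orig)"
  using assms by (auto simp: le_on_def agree_on_def ball_hQ complementary_def)

lemma split_merge_interp:
  assumes "complementary ar ps P" and "le_on (har ar) (hQ ps) W P"
  shows "\<forall>q\<in>hQ ps. \<forall>xs. length xs = har ar q \<longrightarrow> split_interp P (merge_interp P W) q xs = W q xs"
  using assms by (auto simp: le_on_def ball_hQ complementary_def merge_interp_def)

lemma holds_tr_c_iff: "(\<forall>F\<in>tr_c G. holds I P F) \<longleftrightarrow> rule_sat I (P \<circ> Orig) (P \<circ> Orig) (C_rule G)"
  by (simp add: tr_c_def holds_def rule_sat_def C_rule_def)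

lemma holds_diamond_tr_c_iff:
  "holds_diamond I P W Q (tr_c G) \<longleftrightarrow> rule_sat I (P \<circ> Orig) U (C_rule G)"
  by (simp add: tr_c_def rule_sat_def C_rule_def)

lemma holds_tr_l_iff:
  assumes "complementary ar ps P" and "ok_lit ar ps l"
  shows "(\<forall>F\<in>tr_l (l, G). holds I P F) \<longleftrightarrow> rule_sat I (P \<circ> Orig) (P \<circ> Orig) (L_rule (l, G))"
  using assms
  by (cases l) (auto simp: tr_l_def holds_def rule_sat_def L_rule_def ok_lit_def complementaryD)

lemma holds_diamond_tr_l_iff:
  assumes "complementary ar ps P" and "ok_lit ar ps l"
    and "rule_sat I (P \<circ> Orig) (P \<circ> Orig) (L_rule (l, G))"
  shows "holds_diamond I P (split_interp P U) (hQ ps) (tr_l (l, G)) \<longleftrightarrow>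
    rule_sat I (P \<circ> Orig) U (L_rule (l, G))"
  using assms by (cases l) (auto simp: tr_l_def rule_sat_def L_rule_def ok_lit_def complementaryD)

lemma eval_tr_s_iff:
  assumes "complementary ar ps P" and "ok_lit ar ps l1" and "ok_lit ar ps l2"
  shows "(\<forall>F\<in>tr_s (l1, l2, G). eval I P e F) \<longleftrightarrow>
    (eval I (P \<circ> Orig) e G \<longrightarrow>
      (eval I (P \<circ> Orig) e (lit_form l1) \<longleftrightarrow> eval I (P \<circ> Orig) e (lit_form l2)))"
proof -
  obtain b1 p1 t1 b2 p2 t2 where l: "l1 = (b1, p1, t1)" "l2 = (b2, p2, t2)"
    by (cases l1, cases l2)
  show ?thesis
    using assms unfolding l ok_lit_def
    by (cases b1; cases b2; simp add: tr_s_def Let_def complementaryD; argo)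
qed

text \<open>
  The hypothesis that the rule holds in P is needed in both directions: without it the reduct
  does not even force U to satisfy the rule.
\<close>

lemma evald_tr_s_split_iff:
  assumes "complementary ar ps P" and "ok_lit ar ps l1" and "ok_lit ar ps l2"
    and "eval I (P \<circ> Orig) e G \<longrightarrow>
      (eval I (P \<circ> Orig) e (lit_form l1) \<longleftrightarrow> eval I (P \<circ> Orig) e (lit_form l2))"
  shows "(\<forall>F\<in>tr_s (l1, l2, G). evald I P (split_interp P U) (hQ ps) e F) \<longleftrightarrow>
    (eval I (P \<circ> Orig) e G \<longrightarrow> (eval I U e (lit_form l1) \<longleftrightarrow> eval I U e (lit_form l2)))"
proof -
  obtain b1 p1 t1 b2 p2 t2 where l: "l1 = (b1, p1, t1)" "l2 = (b2, p2, t2)"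
    by (cases l1, cases l2)
  show ?thesis
    using assms unfolding l ok_lit_def
    by (cases b1; cases b2; simp add: tr_s_def Let_def complementaryD; argo)
qed

lemma holds_tr_s_iff:
  assumes "complementary ar ps P" and "ok_lit ar ps l1" and "ok_lit ar ps l2"
  shows "(\<forall>F\<in>tr_s (l1, l2, G). holds I P F) \<longleftrightarrow>
    rule_sat I (P \<circ> Orig) (P \<circ> Orig) (S_rule (l1, l2, G))"
  unfolding holds_def ball_all_swap eval_tr_s_iff[OF assms] rule_sat_def S_rule_def FIff_def
  by (simp del: lit_form.simps) blast

lemma holds_diamond_tr_s_iff:
  assumes "complementary ar ps P" and "ok_lit ar ps l1" and "ok_lit ar ps l2"
    and "rule_sat I (P \<circ> Orig) (P \<circ> Orig) (S_rule (l1, l2, G))"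
  shows "holds_diamond I P (split_interp P U) (hQ ps) (tr_s (l1, l2, G)) \<longleftrightarrow>
    rule_sat I (P \<circ> Orig) U (S_rule (l1, l2, G))"
proof -
  have "(\<forall>F\<in>tr_s (l1, l2, G). evald I P (split_interp P U) (hQ ps) e F) \<longleftrightarrow>
      (eval I (P \<circ> Orig) e G \<longrightarrow> (eval I U e (lit_form l1) \<longleftrightarrow> eval I U e (lit_form l2)))" for e
    using assms(4) unfolding rule_sat_def S_rule_def FIff_def
    by (intro evald_tr_s_split_iff[OF assms(1-3)]) (auto simp del: lit_form.simps)
  then show ?thesis
    unfolding rule_sat_def S_rule_def FIff_def by (simp del: lit_form.simps) blast
qed

lemma eval_tr_d_iff:
  assumes "complementary ar ps P"
    and "\<forall>a\<in>set Pos. ok_atm ar ps a" and "\<forall>a\<in>set Ng. ok_atm ar ps a"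
  shows "(\<forall>F\<in>tr_d (Pos, Ng, G). eval I P e F) \<longleftrightarrow>
    (eval I (P \<circ> Orig) e G \<longrightarrow> eval I (P \<circ> Orig) e (fst (D_rule (Pos, Ng, G))))"
proof -
  have "\<forall>(p, ts)\<in>set Ng. P (Hat p) (map (evalt I e) ts) = (\<not> P (Orig p) (map (evalt I e) ts))"
    using assms by (auto simp: ok_atm_def complementaryD)
  then show ?thesis
    by (simp add: tr_d_def D_rule_def split_def ball_Un bex_Un)
qed

lemma evald_tr_d_split_iff:
  assumes "complementary ar ps P"
    and "\<forall>a\<in>set Pos. ok_atm ar ps a" and "\<forall>a\<in>set Ng. ok_atm ar ps a"
  shows "(\<forall>F\<in>tr_d (Pos, Ng, G). evald I P (split_interp P U) (hQ ps) e F) \<longleftrightarrow>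
    (eval I (P \<circ> Orig) e G \<longrightarrow> eval I U e (fst (D_rule (Pos, Ng, G))))"
proof -
  have "\<forall>(p, ts)\<in>set Pos \<union> set Ng.
      p \<in> set ps \<and> P (Hat p) (map (evalt I e) ts) = (\<not> P (Orig p) (map (evalt I e) ts))"
    using assms by (auto simp: ok_atm_def complementaryD)
  then show ?thesis
    by (simp add: tr_d_def D_rule_def split_def ball_Un bex_Un) blast
qed

lemma holds_tr_d_iff:
  assumes "complementary ar ps P"
    and "\<forall>a\<in>set Pos. ok_atm ar ps a" and "\<forall>a\<in>set Ng. ok_atm ar ps a"
  shows "(\<forall>F\<in>tr_d (Pos, Ng, G). holds I P F) \<longleftrightarrow>
    rule_sat I (P \<circ> Orig) (P \<circ> Orig) (D_rule (Pos, Ng, G))"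
  unfolding holds_def ball_all_swap eval_tr_d_iff[OF assms] rule_sat_def by (simp add: D_rule_def)

lemma holds_diamond_tr_d_iff:
  assumes "complementary ar ps P"
    and "\<forall>a\<in>set Pos. ok_atm ar ps a" and "\<forall>a\<in>set Ng. ok_atm ar ps a"
  shows "holds_diamond I P (split_interp P U) (hQ ps) (tr_d (Pos, Ng, G)) \<longleftrightarrow>
    rule_sat I (P \<circ> Orig) U (D_rule (Pos, Ng, G))"
  unfolding ball_all_swap evald_tr_d_split_iff[OF assms] rule_sat_def by (simp add: D_rule_def)

lemma holds_tr_iff:
  assumes ok: "ok_theory ar ps C L S D"
  shows "(\<forall>F\<in>tr ar ps C L S D. holds I P F) \<longleftrightarrow>
    complementary ar ps P \<and> (\<forall>r\<in>rules_of C L S D. rule_sat I (P \<circ> Orig) (P \<circ> Orig) r)"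
proof (cases "complementary ar ps P")
  case True
  have "(\<forall>F\<in>tr_l r. holds I P F) \<longleftrightarrow> rule_sat I (P \<circ> Orig) (P \<circ> Orig) (L_rule r)" if "r \<in> L" for r
    using that by (cases r) (simp add: holds_tr_l_iff[OF True] ok_theoryD[OF ok])
  moreover have "(\<forall>F\<in>tr_s r. holds I P F) \<longleftrightarrow> rule_sat I (P \<circ> Orig) (P \<circ> Orig) (S_rule r)"
    if "r \<in> S" for r
    using that by (cases r) (simp add: holds_tr_s_iff[OF True] ok_theoryD[OF ok])
  moreover have "(\<forall>F\<in>tr_d r. holds I P F) \<longleftrightarrow> rule_sat I (P \<circ> Orig) (P \<circ> Orig) (D_rule r)"
    if "r \<in> D" for r
    using that by (cases r) (simp add: holds_tr_d_iff[OF True] ok_theoryD[OF ok])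
  ultimately show ?thesis
    using True holds_CC_iff[of ar ps I P]
    by (simp add: tr_def rules_of_def ball_Un holds_tr_c_iff cong: ball_cong)
next
  case False
  then show ?thesis
    using holds_CC_iff[of ar ps I P] by (auto simp: tr_def)
qed

lemma holds_diamond_tr_split_iff:
  assumes ok: "ok_theory ar ps C L S D" and compl: "complementary ar ps P"
    and sat: "\<forall>r\<in>rules_of C L S D. rule_sat I (P \<circ> Orig) (P \<circ> Orig) r"
  shows "holds_diamond I P (split_interp P U) (hQ ps) (tr ar ps C L S D) \<longleftrightarrow>
    (\<forall>r\<in>rules_of C L S D. rule_sat I (P \<circ> Orig) U r)"
proof -
  have "holds_diamond I P (split_interp P U) (hQ ps) (tr_l r) \<longleftrightarrow>
      rule_sat I (P \<circ> Orig) U (L_rule r)" if "r \<in> L" for r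
    using that sat
    by (cases r) (simp add: holds_diamond_tr_l_iff[OF compl] ok_theoryD[OF ok] rules_of_def)
  moreover have "holds_diamond I P (split_interp P U) (hQ ps) (tr_s r) \<longleftrightarrow>
      rule_sat I (P \<circ> Orig) U (S_rule r)" if "r \<in> S" for r
    using that sat
    by (cases r) (simp add: holds_diamond_tr_s_iff[OF compl] ok_theoryD[OF ok] rules_of_def)
  moreover have "holds_diamond I P (split_interp P U) (hQ ps) (tr_d r) \<longleftrightarrow>
      rule_sat I (P \<circ> Orig) U (D_rule r)" if "r \<in> D" for r
    using that by (cases r) (simp add: holds_diamond_tr_d_iff[OF compl] ok_theoryD[OF ok])
  moreover have "holds_diamond I P (split_interp P U) (hQ ps) (CC ar ps)"
    using compl holds_CC_iff[of ar ps I P] by (simp add: evald_CC holds_def)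
  ultimately show ?thesis
    by (simp add: tr_def rules_of_def ball_Un holds_diamond_tr_c_iff[where U = U] cong: ball_cong)
qed

lemma smaller_diamond_model_iff:
  assumes ok: "ok_theory ar ps C L S D" and compl: "complementary ar ps P"
    and sat: "\<forall>r\<in>rules_of C L S D. rule_sat I (P \<circ> Orig) (P \<circ> Orig) r"
  shows "(\<exists>W. le_on (har ar) (hQ ps) W P \<and> \<not> le_on (har ar) (hQ ps) P W
              \<and> holds_diamond I P W (hQ ps) (tr ar ps C L S D)) \<longleftrightarrow>
         (\<exists>U. (\<forall>r\<in>rules_of C L S D. rule_sat I (P \<circ> Orig) U r) \<and> \<not> agree_on ar ps U (P \<circ> Orig))"
    (is "(\<exists>W. ?smaller W) \<longleftrightarrow> (\<exists>U. ?other U)")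
proof
  assume "\<exists>W. ?smaller W"
  then obtain W where le: "le_on (har ar) (hQ ps) W P" and nle: "\<not> le_on (har ar) (hQ ps) P W"
    and W: "holds_diamond I P W (hQ ps) (tr ar ps C L S D)"
    by blast
  let ?U = "merge_interp P W"
  have eq: "\<forall>q\<in>hQ ps. \<forall>xs. length xs = har ar q \<longrightarrow> split_interp P ?U q xs = W q xs"
    using split_merge_interp[OF compl le] .
  then have "holds_diamond I P (split_interp P ?U) (hQ ps) (tr ar ps C L S D)"
    using W evald_cong_wf[OF wf_tr[OF ok]] by blast
  moreover have "\<not> le_on (har ar) (hQ ps) P (split_interp P ?U)"
    using nle eq by (simp add: le_on_def)
  ultimately have "?other ?U"
    using holds_diamond_tr_split_iff[OF ok compl sat] le_on_split_interp_iff[OF compl] by blast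
  then show "\<exists>U. ?other U" by blast
next
  assume "\<exists>U. ?other U"
  then obtain U where "?other U" ..
  then have "?smaller (split_interp P U)"
    using le_on_split_interp holds_diamond_tr_split_iff[OF ok compl sat] le_on_split_interp_iff[OF compl]
    by blast
  then show "\<exists>W. ?smaller W" by blast
qed

theorem mainTheorem1:
  fixes ps :: "'p list" and ar :: "'p \<Rightarrow> nat"
    and C :: "('f, 'p) form set"
    and L :: "(('f, 'p) lit \<times> ('f, 'p) form) set"
    and S :: "(('f, 'p) lit \<times> ('f, 'p) lit \<times> ('f, 'p) form) set"
    and D :: "(('f, 'p) atm list \<times> ('f, 'p) atm list \<times> ('f, 'p) form) set"
    and I :: "'f \<Rightarrow> 'a list \<Rightarrow> 'a" and P :: "'p hsym \<Rightarrow> 'a list \<Rightarrow> bool"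
  assumes "distinct ps"
    and "finite C" and "finite L" and "finite S" and "finite D"
    and "\<forall>G\<in>C. ok_body ar G"
    and "\<forall>(l, G)\<in>L. ok_lit ar ps l \<and> ok_body ar G"
    and "\<forall>(l1, l2, G)\<in>S. ok_lit ar ps l1 \<and> ok_lit ar ps l2 \<and> ok_body ar G"
    and "\<forall>(Pos, Ng, G)\<in>D. (\<forall>a\<in>set Pos. ok_atm ar ps a) \<and> (\<forall>a\<in>set Ng. ok_atm ar ps a) \<and> ok_body ar G"
  shows "SM (har ar) (hQ ps) (tr ar ps C L S D) I P \<longleftrightarrow>
         (causal_sat ar ps (rules_of C L S D) I (P \<circ> Orig) \<and> (\<forall>F\<in>CC ar ps. holds I P F))"
proof -
  have ok: "ok_theory ar ps C L S D"
    using assms(6-9) by (simp add: ok_theory_def)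
  have "SM (har ar) (hQ ps) (tr ar ps C L S D) I P \<longleftrightarrow>
      complementary ar ps P \<and> (\<forall>r\<in>rules_of C L S D. rule_sat I (P \<circ> Orig) (P \<circ> Orig) r)
      \<and> \<not> (\<exists>U. (\<forall>r\<in>rules_of C L S D. rule_sat I (P \<circ> Orig) U r) \<and> \<not> agree_on ar ps U (P \<circ> Orig))"
    unfolding SM_def holds_tr_iff[OF ok] using smaller_diamond_model_iff[OF ok] by blast
  also have "\<dots> \<longleftrightarrow> complementary ar ps P \<and> causal_sat ar ps (rules_of C L S D) I (P \<circ> Orig)"
    using causal_sat_iff explainable_heads[OF ok] by blast
  finally show ?thesis
    using holds_CC_iff by blast
qed

end
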